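(* Let $G_u=(V,E_u)$ be a connected simple undirected graph on $n\ge2$ vertices and let $T_0$ be a spanning tree of $G_u$ with maximum degree $D_0$ and diameter $\Delta_0$. For each integer $K$ with $0\le K\le|E_u\setminus E(T_0)|$, let $H_K$ be the directed graph obtained as follows. (Step 2) Starting with $T:=T_0$, repeat $K$ times: choose an edge $\{u^\star,v^\star\}\in E_u\setminus E(T)$ maximizing the distance between $u^\star$ and $v^\star$ in the current graph $T$ (ties broken arbitrarily) and add it to $T$. (Step 3) Let $E_b$ be the set of bridges of the resulting graph $T$ and let the bridge-connected components be the connected components of $T$ after deleting all bridges. In each bridge-connected component $C$, perform a depth-first search from an arbitrary vertex, obtaining a DFS tree $T_C$ and preorder numbers $pre(\cdot)$; for each edge $\{u,v\}$ of $C$ with $pre(u)<pre(v)$, add the directed link $(u,v)$ to $H_K$ if $\{u,v\}\in T_C$, and the directed link $(v,u)$ otherwise. Finally, for each bridge $\{u,v\}\in E_b$ add both $(u,v)$ and $(v,u)$ to $H_K$. Then every $H_K$ is strongly connected, and $$\min_{K}\Phi(H_K)\le 2D_0\,\Delta_0^2\,(1+D_0)^{4\Delta_0}.$$ In particular this holds when $T_0$ is a minimum-degree spanning tree of $G_u$.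
   Context: For a strongly connected directed graph $H$ on $V$ without self-loops, let $D_H^+$ and $D_H^-$ denote its maximum out-degree and maximum in-degree, and $\Delta(H)$ its diameter (the maximum, over ordered pairs of vertices, of the length of a shortest directed path). The design objective is $\Phi(H):=(D_H^++D_H^-)\,\Delta(H)^2\,(1+D_H^+)^{4\Delta(H)}$. A bridge of an undirected graph is an edge whose removal increases the number of connected components. The preorder number $pre(v)$ is the position in $\{1,\dots,|C|\}$ at which $v$ is first visited by the depth-first search. A minimum-degree spanning tree is a spanning tree minimizing the maximum vertex degree. *)

theory Defs
  imports Main
begin

definition simple_ugraph :: "'a set \<Rightarrow> 'a set set \<Rightarrow> bool" where
  "simple_ugraph V E \<longleftrightarrow> finite V \<and> E \<subseteq> {{u,v} | u v. u \<in> V \<and> v \<in> V \<and> u \<noteq> v}"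

definition uedges :: "'a set set \<Rightarrow> ('a \<times> 'a) set" where
  "uedges E = {(u,v). {u,v} \<in> E}"

definition uconnected :: "'a set \<Rightarrow> 'a set set \<Rightarrow> bool" where
  "uconnected V E \<longleftrightarrow> (\<forall>u\<in>V. \<forall>v\<in>V. (u,v) \<in> (uedges E)\<^sup>*)"

definition ucycle :: "'a set set \<Rightarrow> 'a list \<Rightarrow> bool" where
  "ucycle E xs \<longleftrightarrow> length xs \<ge> 3 \<and> distinct xs \<and>
     (\<forall>i < length xs. {xs ! i, xs ! ((i + 1) mod length xs)} \<in> E)"

definition spanning_tree :: "'a set \<Rightarrow> 'a set set \<Rightarrow> 'a set set \<Rightarrow> bool" where
  "spanning_tree V E T \<longleftrightarrow> T \<subseteq> E \<and> uconnected V T \<and> (\<nexists>xs. ucycle T xs)"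

definition udist :: "'a set set \<Rightarrow> 'a \<Rightarrow> 'a \<Rightarrow> nat" where
  "udist E u v = (LEAST k. (u,v) \<in> (uedges E) ^^ k)"

definition udiam :: "'a set \<Rightarrow> 'a set set \<Rightarrow> nat" where
  "udiam V E = Max {udist E u v | u v. u \<in> V \<and> v \<in> V}"

definition udeg :: "'a set set \<Rightarrow> 'a \<Rightarrow> nat" where
  "udeg E v = card {e \<in> E. v \<in> e}"

definition umaxdeg :: "'a set \<Rightarrow> 'a set set \<Rightarrow> nat" where
  "umaxdeg V E = Max (udeg E ` V)"

definition ucomponents :: "'a set \<Rightarrow> 'a set set \<Rightarrow> 'a set set" where
  "ucomponents V E = {{v \<in> V. (u,v) \<in> (uedges E)\<^sup>*} | u. u \<in> V}"

definition bridges :: "'a set \<Rightarrow> 'a set set \<Rightarrow> 'a set set" where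
  "bridges V E = {e \<in> E. card (ucomponents V (E - {e})) > card (ucomponents V E)}"

definition greedy_step :: "'a set set \<Rightarrow> ('a set set \<times> 'a set set) set" where
  "greedy_step Eu = {(T, T'). \<exists>u v. {u,v} \<in> Eu - T \<and>
       (\<forall>a b. {a,b} \<in> Eu - T \<longrightarrow> udist T a b \<le> udist T u v) \<and>
       T' = insert {u,v} T}"

text \<open>Reachable states (stack, visit order, tree edges) of a DFS from root r
  on the graph with edge set EC; neighbours are chosen arbitrarily.
  The search is complete when the stack is empty.\<close>
inductive dfs_reach :: "'a set set \<Rightarrow> 'a \<Rightarrow> 'a list \<Rightarrow> 'a list \<Rightarrow> 'a set set \<Rightarrow> bool"
  for EC :: "'a set set" and r :: 'a where
  start: "dfs_reach EC r [r] [r] {}"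
| descend: "dfs_reach EC r (u # st) vis Tr \<Longrightarrow> {u,v} \<in> EC \<Longrightarrow> v \<notin> set vis \<Longrightarrow>
      dfs_reach EC r (v # u # st) (vis @ [v]) (insert {u,v} Tr)"
| backtrack: "dfs_reach EC r (u # st) vis Tr \<Longrightarrow> (\<forall>v. {u,v} \<in> EC \<longrightarrow> v \<in> set vis) \<Longrightarrow>
      dfs_reach EC r st vis Tr"

text \<open>Preorder number (1-based position in the visit order).\<close>
definition pre :: "'a list \<Rightarrow> 'a \<Rightarrow> nat" where
  "pre vis v = (THE i. i < length vis \<and> vis ! i = v) + 1"

definition comp_edges :: "'a set set \<Rightarrow> 'a set set \<Rightarrow> 'a set \<Rightarrow> 'a set set" where
  "comp_edges E Eb C = {e \<in> E - Eb. e \<subseteq> C}"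

definition step3_output :: "'a set \<Rightarrow> 'a set set \<Rightarrow> ('a \<times> 'a) set \<Rightarrow> bool" where
  "step3_output V E H \<longleftrightarrow>
    (let Eb = bridges V E; Cs = ucomponents V (E - Eb) in
     \<exists>r vis Tr. (\<forall>C\<in>Cs. r C \<in> C \<and> dfs_reach (comp_edges E Eb C) (r C) [] (vis C) (Tr C)) \<and>
       H = (\<Union>C\<in>Cs.
              {(u,v). {u,v} \<in> comp_edges E Eb C \<and> pre (vis C) u < pre (vis C) v \<and> {u,v} \<in> Tr C}
            \<union> {(v,u). {u,v} \<in> comp_edges E Eb C \<and> pre (vis C) u < pre (vis C) v \<and> {u,v} \<notin> Tr C})
           \<union> {(u,v). {u,v} \<in> Eb})"

definition strongly_connected :: "'a set \<Rightarrow> ('a \<times> 'a) set \<Rightarrow> bool" where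
  "strongly_connected V H \<longleftrightarrow> (\<forall>u\<in>V. \<forall>v\<in>V. (u,v) \<in> H\<^sup>*)"

definition outdeg_max :: "'a set \<Rightarrow> ('a \<times> 'a) set \<Rightarrow> nat" where
  "outdeg_max V H = Max ((\<lambda>v. card {w. (v,w) \<in> H}) ` V)"

definition indeg_max :: "'a set \<Rightarrow> ('a \<times> 'a) set \<Rightarrow> nat" where
  "indeg_max V H = Max ((\<lambda>v. card {w. (w,v) \<in> H}) ` V)"

definition ddist :: "('a \<times> 'a) set \<Rightarrow> 'a \<Rightarrow> 'a \<Rightarrow> nat" where
  "ddist H u v = (LEAST k. (u,v) \<in> H ^^ k)"

definition ddiam :: "'a set \<Rightarrow> ('a \<times> 'a) set \<Rightarrow> nat" where
  "ddiam V H = Max {ddist H u v | u v. u \<in> V \<and> v \<in> V}"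

definition Phi :: "'a set \<Rightarrow> ('a \<times> 'a) set \<Rightarrow> nat" where
  "Phi V H = (outdeg_max V H + indeg_max V H) * (ddiam V H)^2 * (1 + outdeg_max V H) ^ (4 * ddiam V H)"

end

(* For K = 0 nothing is added: T0 is a tree, all its edges are bridges, and H_0 is the
   symmetric digraph of T0, whose in- and out-degrees and distances are those of T0. So
   Phi(H_0) is exactly the bound, and the minimum is at most that.

   Strong connectivity of every H_K: bridges are linked both ways, and deleting all bridges
   leaves components without bridges, in which the DFS orientation is strongly connected
   (Robbins). For the DFS we keep the invariant that the root reaches every visited vertex,
   every stack vertex reaches all vertices visited after it, and every visited vertex reaches
   the stack. When a vertex u is popped, the tree edge to its parent is not a bridge, so some
   other edge leaves the subtree of u; it ends on the stack, is not a tree edge, and is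
   therefore oriented out of the subtree. *)

theory Submission
  imports Defs
begin

lemma uedges_sym: "(a, b) \<in> uedges E \<Longrightarrow> (b, a) \<in> uedges E"
  by (simp add: uedges_def insert_commute)

lemma rtrancl_uedges_sym: "(a, b) \<in> (uedges E)\<^sup>* \<Longrightarrow> (b, a) \<in> (uedges E)\<^sup>*"
  by (induction rule: rtrancl_induct) (auto intro: converse_rtrancl_into_rtrancl uedges_sym)

lemma rtrancl_uedges_mono: "E \<subseteq> F \<Longrightarrow> (a, b) \<in> (uedges E)\<^sup>* \<Longrightarrow> (a, b) \<in> (uedges F)\<^sup>*"
  using rtrancl_mono[of "uedges E" "uedges F"] by (auto simp: uedges_def)

lemma uconnected_mono: "uconnected V E \<Longrightarrow> E \<subseteq> F \<Longrightarrow> uconnected V F"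
  unfolding uconnected_def by (meson rtrancl_uedges_mono)

lemma simple_ugraph_subset: "simple_ugraph V E \<Longrightarrow> F \<subseteq> E \<Longrightarrow> simple_ugraph V F"
  by (auto simp: simple_ugraph_def)

lemma simple_ugraph_edgeE:
  assumes "simple_ugraph V E" "e \<in> E"
  obtains x y where "e = {x, y}" "x \<in> V" "y \<in> V" "x \<noteq> y"
  using assms by (auto simp: simple_ugraph_def)

lemma simple_ugraph_edge_vertices:
  assumes "simple_ugraph V E" "{a, b} \<in> E"
  shows "a \<in> V" "b \<in> V" "a \<noteq> b"
  using assms by (auto simp: simple_ugraph_def doubleton_eq_iff)

lemma simple_ugraph_finite_edges:
  assumes "simple_ugraph V E" shows "finite E"
proof -
  have "E \<subseteq> Pow V" using assms by (auto simp: simple_ugraph_def)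
  then show ?thesis using assms by (meson finite_Pow_iff finite_subset simple_ugraph_def)
qed

lemma rtrancl_exit:
  "(a, b) \<in> R\<^sup>* \<Longrightarrow> a \<in> S \<Longrightarrow> b \<notin> S \<Longrightarrow> \<exists>x y. (x, y) \<in> R \<and> x \<in> S \<and> y \<notin> S"
  by (induction rule: rtrancl_induct) auto

lemma rtrancl_uedges_closed:
  assumes "(a, b) \<in> (uedges E)\<^sup>*" "a \<in> X" "\<And>y z. y \<in> X \<Longrightarrow> {y, z} \<in> E \<Longrightarrow> z \<in> X"
  shows "b \<in> X"
  using assms(1) by (induction rule: rtrancl_induct) (use assms(2,3) in \<open>auto simp: uedges_def\<close>)

lemma rtrancl_uedges_insert:
  assumes "(a, c) \<in> (uedges (insert {x, y} G))\<^sup>*"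
  shows "(a, c) \<in> (uedges G)\<^sup>* \<or>
    (((a, x) \<in> (uedges G)\<^sup>* \<or> (a, y) \<in> (uedges G)\<^sup>*) \<and>
     ((x, c) \<in> (uedges G)\<^sup>* \<or> (y, c) \<in> (uedges G)\<^sup>*))"
  using assms
proof (induction rule: rtrancl_induct)
  case (step c d)
  show ?case
  proof (cases "{c, d} \<in> G")
    case True
    then have "(c, d) \<in> uedges G" by (simp add: uedges_def)
    with step.IH show ?thesis using rtrancl_into_rtrancl[of _ _ "uedges G"] by blast
  next
    case False
    with step.hyps(2) have "{c, d} = {x, y}" by (simp add: uedges_def)
    with step.IH show ?thesis by (auto simp: doubleton_eq_iff)
  qed
qed simp

lemma rtrancl_uedges_component:
  assumes "(a, b) \<in> (uedges G)\<^sup>*" "G \<subseteq> F" "simple_ugraph V F"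
    "C = {v \<in> V. (c, v) \<in> (uedges F)\<^sup>*}" "a \<in> C"
  shows "(a, b) \<in> (uedges {f \<in> G. f \<subseteq> C})\<^sup>* \<and> b \<in> C"
  using assms(1)
proof (induction rule: rtrancl_induct)
  case (step b d)
  have bdG: "{b, d} \<in> G" using step.hyps(2) by (simp add: uedges_def)
  then have bdF: "{b, d} \<in> F" using assms(2) by blast
  then have "d \<in> V" using assms(3) by (auto elim!: simple_ugraph_edgeE simp: doubleton_eq_iff)
  moreover have "(c, d) \<in> (uedges F)\<^sup>*"
    using step.IH bdF assms(4) by (auto simp: uedges_def intro: rtrancl_into_rtrancl)
  ultimately have "d \<in> C" using assms(4) by simp
  then have "(b, d) \<in> uedges {f \<in> G. f \<subseteq> C}" using bdG step.IH by (simp add: uedges_def)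
  then show ?case using step.IH \<open>d \<in> C\<close> by (meson rtrancl_into_rtrancl)
qed (use assms(5) in simp)

lemma card_image_lt_if_collapse:
  assumes "finite A" "X \<in> A" "Y \<in> A" "X \<noteq> Y" "h X = h Y"
  shows "card (h ` A) < card A"
proof -
  have "h ` A = insert (h X) (h ` (A - {X}))" using assms(2) by (metis image_insert insert_Diff)
  moreover have "h X \<in> h ` (A - {X})" using assms(3-5) by simp
  ultimately have "card (h ` A) = card (h ` (A - {X}))" by (simp add: insert_absorb)
  also have "\<dots> \<le> card (A - {X})" using assms(1) by (intro card_image_le) auto
  also have "\<dots> < card A" using assms(1,2) by (rule card_Diff1_less)
  finally show ?thesis .
qed

lemma not_bridge_if_reach:
  assumes "{a, b} \<in> E" "(a, b) \<in> (uedges (E - {{a, b}}))\<^sup>*"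
  shows "{a, b} \<notin> bridges V E"
proof -
  have "uedges E \<subseteq> (uedges (E - {{a, b}}))\<^sup>*"
  proof
    fix p assume "p \<in> uedges E"
    then obtain x y where p: "p = (x, y)" "{x, y} \<in> E" by (auto simp: uedges_def)
    show "p \<in> (uedges (E - {{a, b}}))\<^sup>*"
    proof (cases "{x, y} = {a, b}")
      case True
      then show ?thesis using assms(2) rtrancl_uedges_sym[OF assms(2)] p(1)
        by (auto simp: doubleton_eq_iff)
    qed (use p in \<open>auto simp: uedges_def\<close>)
  qed
  then have "(uedges E)\<^sup>* \<subseteq> (uedges (E - {{a, b}}))\<^sup>*" by (rule rtrancl_subset_rtrancl)
  then have "(uedges E)\<^sup>* = (uedges (E - {{a, b}}))\<^sup>*"
    using rtrancl_uedges_mono[of "E - {{a, b}}" E] by auto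
  then show ?thesis unfolding bridges_def ucomponents_def by simp
qed

lemma saturate_component:
  assumes "F \<subseteq> E" "u \<in> V"
  shows "{v \<in> V. \<exists>x\<in>{v \<in> V. (u, v) \<in> (uedges F)\<^sup>*}. (x, v) \<in> (uedges E)\<^sup>*}
    = {v \<in> V. (u, v) \<in> (uedges E)\<^sup>*}"
proof
  show "{v \<in> V. (u, v) \<in> (uedges E)\<^sup>*}
      \<subseteq> {v \<in> V. \<exists>x\<in>{v \<in> V. (u, v) \<in> (uedges F)\<^sup>*}. (x, v) \<in> (uedges E)\<^sup>*}"
    using assms(2) by blast
qed (use rtrancl_uedges_mono[OF assms(1)] rtrancl_trans[of u _ "uedges E"] in blast)

lemma ucomponents_saturate:
  assumes "F \<subseteq> E"
  shows "ucomponents V E = (\<lambda>X. {v \<in> V. \<exists>x\<in>X. (x, v) \<in> (uedges E)\<^sup>*}) ` ucomponents V F"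
proof -
  have "ucomponents V E = (\<lambda>u. {v \<in> V. (u, v) \<in> (uedges E)\<^sup>*}) ` V"
    unfolding ucomponents_def by (simp add: setcompr_eq_image)
  also have "\<dots> = (\<lambda>u. {v \<in> V. \<exists>x\<in>{v \<in> V. (u, v) \<in> (uedges F)\<^sup>*}. (x, v) \<in> (uedges E)\<^sup>*}) ` V"
    using saturate_component[OF assms] by (simp cong: image_cong)
  also have "\<dots> = (\<lambda>X. {v \<in> V. \<exists>x\<in>X. (x, v) \<in> (uedges E)\<^sup>*}) ` ucomponents V F"
    unfolding ucomponents_def by (simp add: setcompr_eq_image image_image)
  finally show ?thesis .
qed

text \<open>The components of E are the saturations of the components of E - {a,b}, and the
  distinct components of a and b have the same saturation.\<close>
lemma bridge_if_not_reach:
  assumes "finite V" "{a, b} \<in> E" "a \<in> V" "b \<in> V"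
    and not_reach: "(a, b) \<notin> (uedges (E - {{a, b}}))\<^sup>*"
  shows "{a, b} \<in> bridges V E"
proof -
  define h where "h X = {v \<in> V. \<exists>x\<in>X. (x, v) \<in> (uedges E)\<^sup>*}" for X
  define comp where "comp u = {v \<in> V. (u, v) \<in> (uedges (E - {{a, b}}))\<^sup>*}" for u
  have A: "ucomponents V (E - {{a, b}}) = comp ` V"
    unfolding ucomponents_def comp_def by (simp add: setcompr_eq_image)
  have "(a, b) \<in> uedges E" using assms(2) by (simp add: uedges_def)
  then have ab: "(a, b) \<in> (uedges E)\<^sup>*" by (rule r_into_rtrancl)
  then have ba: "(b, a) \<in> (uedges E)\<^sup>*" by (rule rtrancl_uedges_sym)
  have "{v \<in> V. (a, v) \<in> (uedges E)\<^sup>*} = {v \<in> V. (b, v) \<in> (uedges E)\<^sup>*}"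
    using rtrancl_trans[OF ab] rtrancl_trans[OF ba] by blast
  then have "h (comp a) = h (comp b)"
    using saturate_component[of "E - {{a, b}}" E] assms(3,4) unfolding h_def comp_def by simp
  moreover have "b \<in> comp b" "b \<notin> comp a" using not_reach assms(4) unfolding comp_def by simp_all
  then have "comp a \<noteq> comp b" by blast
  ultimately have "card (h ` comp ` V) < card (comp ` V)"
    using assms(1,3,4) card_image_lt_if_collapse[of "comp ` V" "comp a" "comp b" h] by simp
  then show ?thesis
    using ucomponents_saturate[of "E - {{a, b}}" E V] A assms(2) unfolding bridges_def h_def by simp
qed

lemma bridge_iff_not_reach:
  assumes "finite V" "{a, b} \<in> E" "a \<in> V" "b \<in> V"
  shows "{a, b} \<in> bridges V E \<longleftrightarrow> (a, b) \<notin> (uedges (E - {{a, b}}))\<^sup>*"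
  using bridge_if_not_reach[OF assms] not_bridge_if_reach[OF assms(2)] by blast

lemma rtrancl_uedges_avoid_edge:
  assumes "(a, b) \<in> (uedges (insert {x, y} G))\<^sup>*" "(a, b) \<in> (uedges F)\<^sup>*" "G \<subseteq> F"
    and "(x, y) \<notin> (uedges F)\<^sup>*"
  shows "(a, b) \<in> (uedges G)\<^sup>*"
proof (rule ccontr)
  assume "(a, b) \<notin> (uedges G)\<^sup>*"
  with rtrancl_uedges_insert[OF assms(1)]
    rtrancl_trans[of a x "uedges G" b] rtrancl_trans[of a y "uedges G" b]
  consider "(a, x) \<in> (uedges G)\<^sup>*" "(y, b) \<in> (uedges G)\<^sup>*"
    | "(a, y) \<in> (uedges G)\<^sup>*" "(x, b) \<in> (uedges G)\<^sup>*"
    by blast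
  moreover have reversed: "(q, p) \<in> (uedges F)\<^sup>*" if "(p, q) \<in> (uedges G)\<^sup>*" for p q
    using rtrancl_uedges_sym[OF rtrancl_uedges_mono[OF assms(3) that]] .
  ultimately have "(x, y) \<in> (uedges F)\<^sup>*"
  proof cases
    case 1
    then show ?thesis using reversed assms(2) by (meson rtrancl_trans)
  next
    case 2
    then have "(y, x) \<in> (uedges F)\<^sup>*" using reversed assms(2) by (meson rtrancl_trans)
    then show ?thesis by (rule rtrancl_uedges_sym)
  qed
  with assms(4) show False ..
qed

text \<open>Every path from a to b avoiding the edge {a,b} already avoids all bridges: a bridge on it
  would lie on a cycle through {a,b}.\<close>
lemma reach_without_bridges:
  assumes "simple_ugraph V E" "{a, b} \<in> E - bridges V E"
  shows "(a, b) \<in> (uedges (E - bridges V E - {{a, b}}))\<^sup>*"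
proof -
  have finite_bridges: "finite (bridges V E)"
    using simple_ugraph_finite_edges[OF assms(1)] unfolding bridges_def by simp
  have ab: "(a, b) \<in> (uedges (E - {{a, b}}))\<^sup>*"
    using assms bridge_iff_not_reach[of V a b E] simple_ugraph_edge_vertices[of V E a b]
    by (simp add: simple_ugraph_def)
  have "(a, b) \<in> (uedges (E - {{a, b}} - B))\<^sup>*" if "B \<subseteq> bridges V E" for B
    using finite_subset[OF that finite_bridges] that
  proof (induction rule: finite_subset_induct)
    case (insert f B)
    have fE: "f \<in> E" using insert.hyps(2) unfolding bridges_def by simp
    with assms(1) obtain x y where f: "f = {x, y}" "x \<in> V" "y \<in> V"
      by (auto elim: simple_ugraph_edgeE)
    show ?case
    proof (rule rtrancl_uedges_avoid_edge)
      have "E - {{a, b}} - B \<subseteq> insert {x, y} (E - {{a, b}} - insert f B)" using f(1) by blast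
      then show "(a, b) \<in> (uedges (insert {x, y} (E - {{a, b}} - insert f B)))\<^sup>*"
        using insert.IH by (rule rtrancl_uedges_mono)
      have "{a, b} \<in> E - {f}" using insert.hyps(2) assms(2) by blast
      then show "(a, b) \<in> (uedges (E - {f}))\<^sup>*" by (simp add: uedges_def r_into_rtrancl)
      show "(x, y) \<notin> (uedges (E - {f}))\<^sup>*"
        using insert.hyps(2) bridge_iff_not_reach[of V x y E] f fE assms(1)
        by (simp add: simple_ugraph_def)
      show "E - {{a, b}} - insert f B \<subseteq> E - {f}" by blast
    qed
  qed (use ab in simp)
  from this[OF order_refl] show ?thesis by (simp add: Diff_eq Int_ac)
qed

lemma rtrancl_distinct_path:
  assumes "(a, c) \<in> R\<^sup>*"
  shows "\<exists>xs. xs \<noteq> [] \<and> hd xs = a \<and> last xs = c \<and> distinct xs \<and> successively (\<lambda>x y. (x, y) \<in> R) xs"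
  using assms
proof (induction rule: rtrancl_induct)
  case (step c d)
  then obtain xs where xs: "xs \<noteq> []" "hd xs = a" "last xs = c" "distinct xs"
    "successively (\<lambda>x y. (x, y) \<in> R) xs" by blast
  show ?case
  proof (cases "d \<in> set xs")
    case True
    then obtain ys zs where split: "xs = ys @ d # zs" by (meson split_list)
    have "hd (ys @ [d]) = a" using xs(2) split by (cases ys) simp_all
    moreover have "successively (\<lambda>x y. (x, y) \<in> R) (ys @ [d])"
      using xs(5) unfolding split successively_append_iff by (simp add: successively_Cons)
    ultimately show ?thesis using xs(4) split by (intro exI[of _ "ys @ [d]"]) simp
  next
    case False
    have "successively (\<lambda>x y. (x, y) \<in> R) (xs @ [d])"
      using xs(1,3,5) step.hyps(2) by (simp add: successively_append_iff)
    then show ?thesis using xs(1,2,4) False by (intro exI[of _ "xs @ [d]"]) simp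
  qed
qed (intro exI[of _ "[a]"], simp)

text \<open>A path avoiding the edge {a,b} closes up with it to a cycle.\<close>
lemma acyclic_edge_not_reach:
  assumes "\<nexists>xs. ucycle T xs" "{a, b} \<in> T" "a \<noteq> b"
  shows "(a, b) \<notin> (uedges (T - {{a, b}}))\<^sup>*"
proof
  assume "(a, b) \<in> (uedges (T - {{a, b}}))\<^sup>*"
  from rtrancl_distinct_path[OF this] obtain xs where xs: "xs \<noteq> []" "hd xs = a" "last xs = b"
    "distinct xs" "successively (\<lambda>x y. (x, y) \<in> uedges (T - {{a, b}})) xs"
    by blast
  have first: "xs ! 0 = a" using xs(1,2) by (simp add: hd_conv_nth)
  have final: "xs ! (length xs - 1) = b" using xs(1,3) by (simp add: last_conv_nth)
  have "length xs \<noteq> 2"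
  proof
    assume "length xs = 2"
    then have "(xs ! 0, xs ! 1) \<in> uedges (T - {{a, b}})" "xs ! 1 = b"
      using successively_nth[OF xs(5)] final by auto
    then show False using first by (simp add: uedges_def)
  qed
  moreover have "length xs \<noteq> 1" using first final assms(3) by auto
  moreover have "length xs \<noteq> 0" using xs(1) by simp
  ultimately have "length xs \<ge> 3" by linarith
  moreover have "{xs ! i, xs ! ((i + 1) mod length xs)} \<in> T" if "i < length xs" for i
  proof (cases "Suc i < length xs")
    case True
    then show ?thesis using successively_nth[OF xs(5)] by (simp add: uedges_def)
  next
    case False
    then have "Suc i = length xs" using that by simp
    then have "i = length xs - 1" "(i + 1) mod length xs = 0" by auto
    then show ?thesis using first final assms(2) by (simp add: insert_commute)
  qed
  ultimately have "ucycle T xs" using xs(4) unfolding ucycle_def by blast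
  with assms(1) show False by blast
qed

lemma bridges_acyclic:
  assumes "simple_ugraph V T" "\<nexists>xs. ucycle T xs"
  shows "bridges V T = T"
proof
  show "T \<subseteq> bridges V T"
  proof
    fix e assume "e \<in> T"
    with assms(1) obtain a b where "e = {a, b}" "a \<in> V" "b \<in> V" "a \<noteq> b"
      by (auto elim: simple_ugraph_edgeE)
    with \<open>e \<in> T\<close> acyclic_edge_not_reach[OF assms(2)] bridge_iff_not_reach[of V a b T] assms(1)
    show "e \<in> bridges V T" by (simp add: simple_ugraph_def)
  qed
qed (auto simp: bridges_def)

lemma card_uedges_neighbours:
  assumes "simple_ugraph V T"
  shows "card {w. (v, w) \<in> uedges T} = udeg T v" "card {w. (w, v) \<in> uedges T} = udeg T v"
proof -
  have img: "(\<lambda>w. {v, w}) ` {w. {v, w} \<in> T} = {e \<in> T. v \<in> e}"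
  proof
    show "{e \<in> T. v \<in> e} \<subseteq> (\<lambda>w. {v, w}) ` {w. {v, w} \<in> T}"
    proof
      fix e assume e: "e \<in> {e \<in> T. v \<in> e}"
      with assms obtain x y where xy: "e = {x, y}" by (blast elim: simple_ugraph_edgeE)
      with e have "v = x \<or> v = y" by auto
      with xy obtain w where "e = {v, w}" by (metis insert_commute)
      with e show "e \<in> (\<lambda>w. {v, w}) ` {w. {v, w} \<in> T}" by (intro image_eqI[of _ _ w]) auto
    qed
  qed blast
  have "inj_on (\<lambda>w. {v, w}) {w. {v, w} \<in> T}"
    by (rule inj_onI) (auto simp: doubleton_eq_iff)
  from card_image[OF this] have "card {w. {v, w} \<in> T} = udeg T v"
    unfolding img udeg_def by simp
  then show "card {w. (v, w) \<in> uedges T} = udeg T v" "card {w. (w, v) \<in> uedges T} = udeg T v"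
    by (simp_all add: uedges_def insert_commute)
qed

lemma Phi_uedges:
  assumes "simple_ugraph V T"
  shows "Phi V (uedges T) = 2 * umaxdeg V T * (udiam V T)^2 * (1 + umaxdeg V T) ^ (4 * udiam V T)"
proof -
  have "outdeg_max V (uedges T) = umaxdeg V T" "indeg_max V (uedges T) = umaxdeg V T"
    unfolding outdeg_max_def indeg_max_def umaxdeg_def
    using card_uedges_neighbours[OF assms] by simp_all
  moreover have "ddiam V (uedges T) = udiam V T"
    unfolding ddiam_def udiam_def ddist_def udist_def by simp
  ultimately show ?thesis unfolding Phi_def by simp
qed

lemma step3_output_acyclic:
  assumes "step3_output V T H" "bridges V T = T"
  shows "H = uedges T"
proof -
  have "comp_edges T T C = {}" for C unfolding comp_edges_def by simp
  with assms show ?thesis unfolding step3_output_def Let_def uedges_def by auto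
qed

lemma pre_nth:
  assumes "distinct xs" "i < length xs"
  shows "pre xs (xs ! i) = Suc i"
proof -
  have "(THE j. j < length xs \<and> xs ! j = xs ! i) = i"
    using assms by (intro the_equality) (auto simp: nth_eq_iff_index_eq)
  then show ?thesis unfolding pre_def by simp
qed

lemma pre_inj:
  assumes "distinct xs" "x \<in> set xs" "y \<in> set xs" "pre xs x = pre xs y"
  shows "x = y"
  using assms pre_nth by (metis in_set_conv_nth nat.inject)

lemma pre_append:
  assumes "distinct xs" "v \<notin> set xs" "x \<in> set xs"
  shows "pre (xs @ [v]) x = pre xs x"
proof -
  obtain i where i: "i < length xs" "xs ! i = x" using assms(3) by (auto simp: in_set_conv_nth)
  then have "pre (xs @ [v]) ((xs @ [v]) ! i) = Suc i"
    using assms(1,2) by (intro pre_nth) auto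
  with i pre_nth[OF assms(1) i(1)] show ?thesis by (simp add: nth_append)
qed

lemma pre_less_append_last:
  assumes "distinct xs" "v \<notin> set xs" "x \<in> set xs"
  shows "pre (xs @ [v]) x < pre (xs @ [v]) v"
proof -
  obtain i where i: "i < length xs" "xs ! i = x" using assms(3) by (auto simp: in_set_conv_nth)
  have "pre (xs @ [v]) ((xs @ [v]) ! i) < pre (xs @ [v]) ((xs @ [v]) ! length xs)"
    using assms(1,2) i(1) by (simp add: pre_nth del: nth_append_length)
  with i show ?thesis by (simp add: nth_append)
qed

text \<open>The links that step 3 puts on the edges EC of a component, restricted to the vertices
  visited so far.\<close>
definition dfs_orientation :: "'a set set \<Rightarrow> 'a list \<Rightarrow> 'a set set \<Rightarrow> ('a \<times> 'a) set" where
  "dfs_orientation EC vis Tr =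
     {(a, b). {a, b} \<in> EC \<and> a \<in> set vis \<and> b \<in> set vis \<and> pre vis a < pre vis b \<and> {a, b} \<in> Tr}
   \<union> {(b, a). {a, b} \<in> EC \<and> a \<in> set vis \<and> b \<in> set vis \<and> pre vis a < pre vis b \<and> {a, b} \<notin> Tr}"

lemma dfs_orientation_descend:
  assumes "distinct vis" "v \<notin> set vis" "u \<in> set vis"
  shows "dfs_orientation EC vis Tr \<subseteq> dfs_orientation EC (vis @ [v]) (insert {u, v} Tr)"
    and "{u, v} \<in> EC \<Longrightarrow> (u, v) \<in> dfs_orientation EC (vis @ [v]) (insert {u, v} Tr)"
proof
  fix p assume "p \<in> dfs_orientation EC vis Tr"
  moreover have "{a, b} \<noteq> {u, v}" if "a \<in> set vis" "b \<in> set vis" for a b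
    using that assms(2) by (auto simp: doubleton_eq_iff)
  ultimately show "p \<in> dfs_orientation EC (vis @ [v]) (insert {u, v} Tr)"
    using pre_append[OF assms(1,2)] unfolding dfs_orientation_def by auto
next
  assume "{u, v} \<in> EC"
  then show "(u, v) \<in> dfs_orientation EC (vis @ [v]) (insert {u, v} Tr)"
    using pre_less_append_last[OF assms] assms(3) unfolding dfs_orientation_def by simp
qed

text \<open>The DFS stack is the tree path from the current vertex back to the root r.\<close>
definition dfs_stack_wf :: "'a set set \<Rightarrow> 'a \<Rightarrow> 'a list \<Rightarrow> 'a list \<Rightarrow> 'a set set \<Rightarrow> bool" where
  "dfs_stack_wf EC r st vis Tr \<longleftrightarrow>
     distinct vis \<and> r \<in> set vis \<and> set st \<subseteq> set vis \<and>
     sorted_wrt (\<lambda>a b. pre vis b < pre vis a) st \<and> (st \<noteq> [] \<longrightarrow> last st = r) \<and>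
     successively (\<lambda>a b. {a, b} \<in> EC) st \<and> (\<forall>e\<in>Tr. e \<subseteq> set vis)"

definition dfs_finished_closed :: "'a set set \<Rightarrow> 'a list \<Rightarrow> 'a list \<Rightarrow> bool" where
  "dfs_finished_closed EC st vis \<longleftrightarrow> (\<forall>y \<in> set vis - set st. \<forall>z. {y, z} \<in> EC \<longrightarrow> z \<in> set vis)"

text \<open>No edge with a finished lower end, and no tree edge, jumps over a vertex of the stack.\<close>
definition dfs_edges_nested :: "'a set set \<Rightarrow> 'a list \<Rightarrow> 'a list \<Rightarrow> bool" where
  "dfs_edges_nested EC st vis \<longleftrightarrow>
     (\<forall>x y s. {x, y} \<in> EC \<longrightarrow> x \<in> set vis \<longrightarrow> y \<in> set vis \<longrightarrow> pre vis y < pre vis x \<longrightarrow>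
        y \<notin> set st \<longrightarrow> s \<in> set st \<longrightarrow> pre vis s < pre vis y \<or> pre vis x < pre vis s)"

definition dfs_tree_edges_nested :: "'a list \<Rightarrow> 'a list \<Rightarrow> 'a set set \<Rightarrow> bool" where
  "dfs_tree_edges_nested st vis Tr \<longleftrightarrow>
     (\<forall>a b s. {a, b} \<in> Tr \<longrightarrow> a \<in> set vis \<longrightarrow> b \<in> set vis \<longrightarrow> pre vis a < pre vis b \<longrightarrow>
        s \<in> set st \<longrightarrow> \<not> (pre vis a < pre vis s \<and> pre vis s < pre vis b))"

definition dfs_orientation_reach :: "'a set set \<Rightarrow> 'a \<Rightarrow> 'a list \<Rightarrow> 'a list \<Rightarrow> 'a set set \<Rightarrow> bool" where
  "dfs_orientation_reach EC r st vis Tr \<longleftrightarrow>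
     (\<forall>s\<in>set st. \<forall>w\<in>set vis. pre vis s \<le> pre vis w \<longrightarrow> (s, w) \<in> (dfs_orientation EC vis Tr)\<^sup>*) \<and>
     (\<forall>w\<in>set vis. (r, w) \<in> (dfs_orientation EC vis Tr)\<^sup>*) \<and>
     (\<forall>w\<in>set vis. \<exists>y\<in>insert r (set st). (w, y) \<in> (dfs_orientation EC vis Tr)\<^sup>*)"

lemma dfs_orientation_reachD:
  assumes "dfs_orientation_reach EC r st vis Tr"
  shows "\<And>s w. s \<in> set st \<Longrightarrow> w \<in> set vis \<Longrightarrow> pre vis s \<le> pre vis w \<Longrightarrow>
      (s, w) \<in> (dfs_orientation EC vis Tr)\<^sup>*"
    and "\<And>w. w \<in> set vis \<Longrightarrow> (r, w) \<in> (dfs_orientation EC vis Tr)\<^sup>*"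
    and "\<And>w. w \<in> set vis \<Longrightarrow> \<exists>y\<in>insert r (set st). (w, y) \<in> (dfs_orientation EC vis Tr)\<^sup>*"
  using assms unfolding dfs_orientation_reach_def by simp_all

definition dfs_inv :: "'a set set \<Rightarrow> 'a \<Rightarrow> 'a list \<Rightarrow> 'a list \<Rightarrow> 'a set set \<Rightarrow> bool" where
  "dfs_inv EC r st vis Tr \<longleftrightarrow>
     dfs_stack_wf EC r st vis Tr \<and> dfs_finished_closed EC st vis \<and> dfs_edges_nested EC st vis \<and>
     dfs_tree_edges_nested st vis Tr \<and> dfs_orientation_reach EC r st vis Tr"

lemma dfs_inv_start: "dfs_inv EC r [r] [r] {}"
  by (simp add: dfs_inv_def dfs_stack_wf_def dfs_finished_closed_def dfs_edges_nested_def
      dfs_tree_edges_nested_def dfs_orientation_reach_def)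

lemma dfs_stack_wf_descend:
  assumes wf: "dfs_stack_wf EC r (u # st) vis Tr" and uv: "{u, v} \<in> EC" and v: "v \<notin> set vis"
  shows "dfs_stack_wf EC r (v # u # st) (vis @ [v]) (insert {u, v} Tr)"
proof -
  have dist: "distinct vis" and stack: "set (u # st) \<subseteq> set vis"
    and sorted: "sorted_wrt (\<lambda>a b. pre vis b < pre vis a) (u # st)"
    using wf by (auto simp: dfs_stack_wf_def)
  have same: "pre (vis @ [v]) x = pre vis x" if "x \<in> set (u # st)" for x
    using pre_append[OF dist v subsetD[OF stack that]] .
  have "pre (vis @ [v]) x < pre (vis @ [v]) v" if "x \<in> set (u # st)" for x
    using pre_less_append_last[OF dist v subsetD[OF stack that]] .
  moreover have "sorted_wrt (\<lambda>a b. pre (vis @ [v]) b < pre (vis @ [v]) a) (u # st)"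
    by (rule sorted_wrt_mono_rel[OF _ sorted]) (simp add: same)
  moreover have "{v, u} \<in> EC" using uv by (simp add: insert_commute)
  ultimately show ?thesis
    using wf v unfolding dfs_stack_wf_def by auto
qed

lemma dfs_edges_nested_descend:
  assumes "dfs_inv EC r (u # st) vis Tr" "v \<notin> set vis"
  shows "dfs_edges_nested EC (v # u # st) (vis @ [v])"
  unfolding dfs_edges_nested_def
proof (intro allI impI)
  fix x y s
  assume xy: "{x, y} \<in> EC" "x \<in> set (vis @ [v])" "y \<in> set (vis @ [v])"
    "pre (vis @ [v]) y < pre (vis @ [v]) x" "y \<notin> set (v # u # st)" and s: "s \<in> set (v # u # st)"
  have dist: "distinct vis" and stack: "set (u # st) \<subseteq> set vis"
    and closed: "dfs_finished_closed EC (u # st) vis" and nested: "dfs_edges_nested EC (u # st) vis"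
    using assms(1) by (auto simp: dfs_inv_def dfs_stack_wf_def)
  have y: "y \<in> set vis" "y \<notin> set (u # st)" using xy(3,5) by auto
  have x: "x \<in> set vis"
  proof (rule ccontr)
    assume "x \<notin> set vis"
    moreover have "{y, x} \<in> EC" using xy(1) by (simp add: insert_commute)
    ultimately show False using closed y unfolding dfs_finished_closed_def by blast
  qed
  show "pre (vis @ [v]) s < pre (vis @ [v]) y \<or> pre (vis @ [v]) x < pre (vis @ [v]) s"
  proof (cases "s = v")
    case True
    then show ?thesis using pre_less_append_last[OF dist assms(2) x] by simp
  next
    case False
    then have s': "s \<in> set (u # st)" "s \<in> set vis" using s stack by auto
    have "pre vis y < pre vis x" using xy(4) pre_append[OF dist assms(2)] x y(1) by simp
    with nested xy(1) x y s'(1) have "pre vis s < pre vis y \<or> pre vis x < pre vis s"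
      unfolding dfs_edges_nested_def by blast
    then show ?thesis using pre_append[OF dist assms(2)] x y(1) s'(2) by simp
  qed
qed

lemma dfs_tree_edges_nested_descend:
  assumes "dfs_inv EC r (u # st) vis Tr" "v \<notin> set vis"
  shows "dfs_tree_edges_nested (v # u # st) (vis @ [v]) (insert {u, v} Tr)"
  unfolding dfs_tree_edges_nested_def
proof (intro allI impI)
  fix a b s
  assume ab: "{a, b} \<in> insert {u, v} Tr" "a \<in> set (vis @ [v])" "b \<in> set (vis @ [v])"
    "pre (vis @ [v]) a < pre (vis @ [v]) b" and s: "s \<in> set (v # u # st)"
  have dist: "distinct vis" and stack: "set (u # st) \<subseteq> set vis"
    and sorted: "sorted_wrt (\<lambda>a b. pre vis b < pre vis a) (u # st)"
    and tree: "\<forall>e\<in>Tr. e \<subseteq> set vis" and nested: "dfs_tree_edges_nested (u # st) vis Tr"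
    using assms(1) by (auto simp: dfs_inv_def dfs_stack_wf_def)
  note same = pre_append[OF dist assms(2)]
  note v_last = pre_less_append_last[OF dist assms(2)]
  show "\<not> (pre (vis @ [v]) a < pre (vis @ [v]) s \<and> pre (vis @ [v]) s < pre (vis @ [v]) b)"
  proof (cases "{a, b} = {u, v}")
    case True
    have u: "u \<in> set vis" using stack by simp
    with True ab(4) v_last[OF u] have ab': "a = u" "b = v" by (auto simp: doubleton_eq_iff)
    have "pre vis s < pre vis u" if "s \<in> set st" using sorted that by simp
    then show ?thesis using s ab' same[OF u] same stack by (auto simp: subset_iff)
  next
    case False
    then have "{a, b} \<in> Tr" using ab(1) by simp
    with tree have ab': "a \<in> set vis" "b \<in> set vis" by auto
    show ?thesis
    proof (cases "s = v")
      case True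
      then show ?thesis using v_last[OF ab'(2)] by simp
    next
      case False
      then have s': "s \<in> set (u # st)" "s \<in> set vis" using s stack by auto
      with nested \<open>{a, b} \<in> Tr\<close> ab' ab(4) show ?thesis
        unfolding dfs_tree_edges_nested_def same[OF ab'(1)] same[OF ab'(2)] same[OF s'(2)] by blast
    qed
  qed
qed

lemma dfs_orientation_rtrancl_descend:
  assumes "distinct vis" "v \<notin> set vis" "u \<in> set vis" "{u, v} \<in> EC"
    and "(x, y) \<in> (dfs_orientation EC vis Tr)\<^sup>*"
  shows "(x, y) \<in> (dfs_orientation EC (vis @ [v]) (insert {u, v} Tr))\<^sup>*"
    and "y = u \<Longrightarrow> (x, v) \<in> (dfs_orientation EC (vis @ [v]) (insert {u, v} Tr))\<^sup>*"
proof -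
  show old: "(x, y) \<in> (dfs_orientation EC (vis @ [v]) (insert {u, v} Tr))\<^sup>*"
    using rtrancl_mono[OF dfs_orientation_descend(1)[OF assms(1-3)]] assms(5) by blast
  assume "y = u"
  with old dfs_orientation_descend(2)[OF assms(1-4)]
  show "(x, v) \<in> (dfs_orientation EC (vis @ [v]) (insert {u, v} Tr))\<^sup>*"
    by (simp add: rtrancl_into_rtrancl)
qed

lemma dfs_stack_reach_descend:
  assumes "dfs_inv EC r (u # st) vis Tr" "{u, v} \<in> EC" "v \<notin> set vis"
    and s: "s \<in> set (v # u # st)" and w: "w \<in> set (vis @ [v])"
    and le: "pre (vis @ [v]) s \<le> pre (vis @ [v]) w"
  shows "(s, w) \<in> (dfs_orientation EC (vis @ [v]) (insert {u, v} Tr))\<^sup>*"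
proof (cases "s = v")
  case True
  have dist: "distinct vis" using assms(1) by (simp add: dfs_inv_def dfs_stack_wf_def)
  have "w \<notin> set vis" using True le pre_less_append_last[OF dist assms(3)] by (meson leD)
  then show ?thesis using True w by simp
next
  case False
  have dist: "distinct vis" and stack: "set (u # st) \<subseteq> set vis"
    and sorted: "sorted_wrt (\<lambda>a b. pre vis b < pre vis a) (u # st)"
    and reach: "dfs_orientation_reach EC r (u # st) vis Tr"
    using assms(1) by (auto simp: dfs_inv_def dfs_stack_wf_def)
  note descend = dfs_orientation_rtrancl_descend[OF dist assms(3) _ assms(2)]
  from False have s': "s \<in> set (u # st)" "s \<in> set vis" using s stack by auto
  show ?thesis
  proof (cases "w = v")
    case True
    have "pre vis s \<le> pre vis u" using s'(1) sorted by (auto intro: less_imp_le)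
    then show ?thesis using True descend(2) dfs_orientation_reachD(1)[OF reach s'(1)] stack by simp
  next
    case False
    then have w': "w \<in> set vis" using w by simp
    then have "pre vis s \<le> pre vis w" using le pre_append[OF dist assms(3)] s'(2) by simp
    then show ?thesis using descend(1) dfs_orientation_reachD(1)[OF reach s'(1) w'] stack by simp
  qed
qed

lemma dfs_orientation_reach_descend:
  assumes "dfs_inv EC r (u # st) vis Tr" "{u, v} \<in> EC" "v \<notin> set vis"
  shows "dfs_orientation_reach EC r (v # u # st) (vis @ [v]) (insert {u, v} Tr)"
proof -
  let ?O' = "dfs_orientation EC (vis @ [v]) (insert {u, v} Tr)"
  have dist: "distinct vis" and u: "u \<in> set vis"
    and reach: "dfs_orientation_reach EC r (u # st) vis Tr"
    using assms(1) by (auto simp: dfs_inv_def dfs_stack_wf_def)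
  note descend = dfs_orientation_rtrancl_descend[OF dist assms(3) u assms(2)]
  have "(r, w) \<in> ?O'\<^sup>*" if "w \<in> set (vis @ [v])" for w
  proof (cases "w = v")
    case False
    then show ?thesis using that descend(1) dfs_orientation_reachD(2)[OF reach] by simp
  qed (use descend(2) dfs_orientation_reachD(2)[OF reach u] in simp)
  moreover have "\<exists>y\<in>insert r (set (v # u # st)). (w, y) \<in> ?O'\<^sup>*" if w: "w \<in> set (vis @ [v])" for w
  proof (cases "w = v")
    case False
    then obtain y where "y \<in> insert r (set (u # st))" "(w, y) \<in> (dfs_orientation EC vis Tr)\<^sup>*"
      using w dfs_orientation_reachD(3)[OF reach] by auto
    then show ?thesis using descend(1) by auto
  qed simp
  ultimately show ?thesis
    using dfs_stack_reach_descend[OF assms] unfolding dfs_orientation_reach_def by blast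
qed

definition bridgeless :: "'a set set \<Rightarrow> bool" where
  "bridgeless E \<longleftrightarrow> (\<forall>x y. {x, y} \<in> E \<longrightarrow> (x, y) \<in> (uedges (E - {{x, y}}))\<^sup>*)"

text \<open>The vertices w with pre u \<le> pre w form the subtree of u.\<close>
lemma dfs_subtree_exit:
  assumes "dfs_inv EC r (u # p # rest) vis Tr" "\<forall>z. {u, z} \<in> EC \<longrightarrow> z \<in> set vis" "bridgeless EC"
  obtains x y where "{x, y} \<in> EC" "{x, y} \<noteq> {u, p}" "x \<in> set vis" "y \<in> set vis"
    "pre vis u \<le> pre vis x" "pre vis y < pre vis u"
proof -
  let ?S = "{w \<in> set vis. pre vis u \<le> pre vis w}"
  have dist: "distinct vis" and stack: "set (u # p # rest) \<subseteq> set vis"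
    and sorted: "sorted_wrt (\<lambda>a b. pre vis b < pre vis a) (u # p # rest)"
    and up: "{u, p} \<in> EC" and closed: "dfs_finished_closed EC (u # p # rest) vis"
    using assms(1) unfolding dfs_inv_def dfs_stack_wf_def by simp_all
  have path: "(u, p) \<in> (uedges (EC - {{u, p}}))\<^sup>*" using assms(3) up by (simp add: bridgeless_def)
  have "u \<in> ?S" using stack by simp
  moreover have "p \<notin> ?S" using sorted by simp
  ultimately obtain x y where xy: "(x, y) \<in> uedges (EC - {{u, p}})" "x \<in> ?S" "y \<notin> ?S"
    using rtrancl_exit[OF path] by blast
  have edge: "{x, y} \<in> EC" "{x, y} \<noteq> {u, p}" using xy(1) by (simp_all add: uedges_def)
  have y: "y \<in> set vis"
  proof (cases "x = u")
    case True
    then show ?thesis using assms(2) edge(1) by blast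
  next
    case False
    moreover have "u \<in> set vis" using stack by simp
    ultimately have "pre vis x \<noteq> pre vis u" using xy(2) pre_inj[OF dist] by blast
    then have "pre vis u < pre vis x" using xy(2) by simp
    moreover have "pre vis s \<le> pre vis u" if "s \<in> set (u # p # rest)" for s
      using that sorted by (auto intro: less_imp_le)
    ultimately have "x \<notin> set (u # p # rest)" by (meson leD)
    then show ?thesis using closed edge(1) xy(2) unfolding dfs_finished_closed_def by blast
  qed
  show ?thesis using that[OF edge] xy(2,3) y by auto
qed

text \<open>The only tree edge between the subtree of u and the rest of the stack is {u,p}.\<close>
lemma dfs_exit_edge_not_tree:
  assumes "dfs_inv EC r (u # p # rest) vis Tr" "{x, y} \<noteq> {u, p}" "x \<in> set vis" "y \<in> set vis"
    and "pre vis u \<le> pre vis x" "y \<in> set (p # rest)"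
  shows "{y, x} \<notin> Tr"
proof
  assume tree_edge: "{y, x} \<in> Tr"
  have dist: "distinct vis" and u: "u \<in> set vis"
    and sorted: "sorted_wrt (\<lambda>a b. pre vis b < pre vis a) (u # p # rest)"
    and tree: "dfs_tree_edges_nested (u # p # rest) vis Tr"
    using assms(1) unfolding dfs_inv_def dfs_stack_wf_def by simp_all
  have "pre vis y < pre vis x" using assms(5,6) sorted by auto
  then have not_between: "\<not> (pre vis y < pre vis s \<and> pre vis s < pre vis x)"
    if "s \<in> set (u # p # rest)" for s
    using tree tree_edge assms(3,4) that unfolding dfs_tree_edges_nested_def by blast
  have "pre vis y < pre vis u" using assms(6) sorted by auto
  with not_between[of u] assms(5) have "pre vis x = pre vis u" by simp
  then have "x = u" using pre_inj[OF dist assms(3) u] by simp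
  moreover have "pre vis p < pre vis u" using sorted by simp
  ultimately have "\<not> pre vis y < pre vis p" using not_between[of p] by simp
  moreover have "pre vis y < pre vis p" if "y \<in> set rest" using sorted that by simp
  ultimately have "y = p" using assms(6) by auto
  with \<open>x = u\<close> assms(2) show False by simp
qed

lemma dfs_finished_reaches_stack:
  assumes "dfs_inv EC r (u # p # rest) vis Tr" "\<forall>z. {u, z} \<in> EC \<longrightarrow> z \<in> set vis" "bridgeless EC"
  shows "\<exists>y\<in>set (p # rest). (u, y) \<in> (dfs_orientation EC vis Tr)\<^sup>*"
proof -
  obtain x y where edge: "{x, y} \<in> EC" "{x, y} \<noteq> {u, p}" and xy: "x \<in> set vis" "y \<in> set vis"
    and below: "pre vis u \<le> pre vis x" "pre vis y < pre vis u"
    using dfs_subtree_exit[OF assms] .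
  have nested: "dfs_edges_nested EC (u # p # rest) vis"
    and reach: "dfs_orientation_reach EC r (u # p # rest) vis Tr"
    using assms(1) unfolding dfs_inv_def by simp_all
  have "y \<in> set (u # p # rest)"
    using nested edge(1) xy below unfolding dfs_edges_nested_def by force
  then have y_stack: "y \<in> set (p # rest)" using below(2) by auto
  have "{y, x} \<notin> Tr" using dfs_exit_edge_not_tree[OF assms(1) edge(2) xy below(1) y_stack] .
  moreover have "{y, x} \<in> EC" using edge(1) by (simp add: insert_commute)
  moreover have "pre vis y < pre vis x" using below by simp
  ultimately have "(x, y) \<in> dfs_orientation EC vis Tr"
    using xy unfolding dfs_orientation_def by blast
  moreover have "(u, x) \<in> (dfs_orientation EC vis Tr)\<^sup>*"
    using dfs_orientation_reachD(1)[OF reach _ xy(1) below(1)] by simp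
  ultimately show ?thesis using y_stack by (meson rtrancl_into_rtrancl)
qed

lemma dfs_inv_descend:
  assumes "dfs_inv EC r (u # st) vis Tr" "{u, v} \<in> EC" "v \<notin> set vis"
  shows "dfs_inv EC r (v # u # st) (vis @ [v]) (insert {u, v} Tr)"
proof -
  have closed: "dfs_finished_closed EC (u # st) vis" using assms(1) unfolding dfs_inv_def by simp
  have "dfs_finished_closed EC (v # u # st) (vis @ [v])"
    unfolding dfs_finished_closed_def
  proof (intro ballI allI impI)
    fix y z assume "y \<in> set (vis @ [v]) - set (v # u # st)" "{y, z} \<in> EC"
    moreover from this have "y \<in> set vis - set (u # st)" by auto
    ultimately have "z \<in> set vis" using closed unfolding dfs_finished_closed_def by blast
    then show "z \<in> set (vis @ [v])" by simp
  qed
  moreover have "dfs_stack_wf EC r (v # u # st) (vis @ [v]) (insert {u, v} Tr)"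
    using assms(1) unfolding dfs_inv_def by (simp add: dfs_stack_wf_descend[OF _ assms(2,3)])
  ultimately show ?thesis
    using dfs_edges_nested_descend[OF assms(1,3)] dfs_tree_edges_nested_descend[OF assms(1,3)]
      dfs_orientation_reach_descend[OF assms] unfolding dfs_inv_def by simp
qed

lemma dfs_orientation_reach_backtrack:
  assumes "dfs_inv EC r (u # st) vis Tr" "\<forall>z. {u, z} \<in> EC \<longrightarrow> z \<in> set vis" "bridgeless EC"
  shows "dfs_orientation_reach EC r st vis Tr"
proof -
  let ?O = "dfs_orientation EC vis Tr"
  have reach: "dfs_orientation_reach EC r (u # st) vis Tr"
    and last: "last (u # st) = r" using assms(1) unfolding dfs_inv_def dfs_stack_wf_def by simp_all
  have u_exit: "\<exists>y\<in>insert r (set st). (u, y) \<in> ?O\<^sup>*"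
  proof (cases st)
    case (Cons p rest)
    then show ?thesis using dfs_finished_reaches_stack[OF assms(1)[unfolded Cons] assms(2,3)] by auto
  qed (use last in simp)
  have "\<exists>y\<in>insert r (set st). (w, y) \<in> ?O\<^sup>*" if w: "w \<in> set vis" for w
  proof -
    obtain y where y: "y \<in> insert r (set (u # st))" "(w, y) \<in> ?O\<^sup>*"
      using dfs_orientation_reachD(3)[OF reach w] by blast
    show ?thesis
    proof (cases "y = u")
      case True
      with u_exit y(2) show ?thesis using rtrancl_trans[of w u ?O] by blast
    qed (use y in auto)
  qed
  moreover have "(s, w) \<in> ?O\<^sup>*" if "s \<in> set st" "w \<in> set vis" "pre vis s \<le> pre vis w" for s w
    using dfs_orientation_reachD(1)[OF reach] that by simp
  ultimately show ?thesis
    using dfs_orientation_reachD(2)[OF reach] unfolding dfs_orientation_reach_def by blast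
qed

lemma dfs_finished_closed_backtrack:
  assumes "dfs_finished_closed EC (u # st) vis" "\<forall>z. {u, z} \<in> EC \<longrightarrow> z \<in> set vis"
  shows "dfs_finished_closed EC st vis"
  unfolding dfs_finished_closed_def
proof (intro ballI allI impI)
  fix y z assume y: "y \<in> set vis - set st" and yz: "{y, z} \<in> EC"
  show "z \<in> set vis"
  proof (cases "y = u")
    case False
    with y have "y \<in> set vis - set (u # st)" by simp
    with assms(1) yz show ?thesis unfolding dfs_finished_closed_def by blast
  qed (use assms(2) yz in blast)
qed

lemma dfs_edges_nested_backtrack:
  assumes "dfs_edges_nested EC (u # st) vis" "sorted_wrt (\<lambda>a b. pre vis b < pre vis a) (u # st)"
  shows "dfs_edges_nested EC st vis"
  unfolding dfs_edges_nested_def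
proof (intro allI impI)
  fix x y s assume xy: "{x, y} \<in> EC" "x \<in> set vis" "y \<in> set vis" "pre vis y < pre vis x"
    "y \<notin> set st" and s: "s \<in> set st"
  show "pre vis s < pre vis y \<or> pre vis x < pre vis s"
  proof (cases "y = u")
    case True
    then show ?thesis using assms(2) s by simp
  next
    case False
    then have "y \<notin> set (u # st)" using xy(5) by simp
    with assms(1) xy(1-4) s show ?thesis unfolding dfs_edges_nested_def by (meson list.set_intros(2))
  qed
qed

lemma dfs_inv_backtrack:
  assumes "dfs_inv EC r (u # st) vis Tr" "\<forall>z. {u, z} \<in> EC \<longrightarrow> z \<in> set vis" "bridgeless EC"
  shows "dfs_inv EC r st vis Tr"
proof -
  have wf: "dfs_stack_wf EC r (u # st) vis Tr" and closed: "dfs_finished_closed EC (u # st) vis"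
    and nested: "dfs_edges_nested EC (u # st) vis" and tree: "dfs_tree_edges_nested (u # st) vis Tr"
    using assms(1) unfolding dfs_inv_def by simp_all
  have "dfs_stack_wf EC r st vis Tr"
    using wf unfolding dfs_stack_wf_def by (cases st) auto
  moreover have "dfs_edges_nested EC st vis"
    using nested wf unfolding dfs_stack_wf_def by (simp add: dfs_edges_nested_backtrack)
  moreover have "dfs_tree_edges_nested st vis Tr"
    using tree unfolding dfs_tree_edges_nested_def by simp
  ultimately show ?thesis
    using dfs_finished_closed_backtrack[OF closed assms(2)] dfs_orientation_reach_backtrack[OF assms]
    unfolding dfs_inv_def by blast
qed

lemma dfs_reach_inv:
  assumes "dfs_reach EC r st vis Tr" "bridgeless EC"
  shows "dfs_inv EC r st vis Tr"
  using assms(1)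
proof (induction rule: dfs_reach.induct)
  case start
  show ?case by (rule dfs_inv_start)
next
  case (descend u st vis Tr v)
  from descend.IH descend.hyps(2,3) show ?case by (rule dfs_inv_descend)
next
  case (backtrack u st vis Tr)
  from backtrack.IH backtrack.hyps(2) assms(2) show ?case by (rule dfs_inv_backtrack)
qed

text \<open>Robbins' theorem for the orientation computed by a complete DFS of a bridgeless graph.\<close>
lemma dfs_complete_strongly_connected:
  assumes "dfs_reach EC r [] vis Tr" "bridgeless EC"
  shows "r \<in> set vis" "\<And>y z. y \<in> set vis \<Longrightarrow> {y, z} \<in> EC \<Longrightarrow> z \<in> set vis"
    "\<And>a b. a \<in> set vis \<Longrightarrow> b \<in> set vis \<Longrightarrow> (a, b) \<in> (dfs_orientation EC vis Tr)\<^sup>*"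
proof -
  have wf: "dfs_stack_wf EC r [] vis Tr" and closed: "dfs_finished_closed EC [] vis"
    and reach: "dfs_orientation_reach EC r [] vis Tr"
    using dfs_reach_inv[OF assms] unfolding dfs_inv_def by simp_all
  show "r \<in> set vis" using wf unfolding dfs_stack_wf_def by simp
  show "\<And>y z. y \<in> set vis \<Longrightarrow> {y, z} \<in> EC \<Longrightarrow> z \<in> set vis"
    using closed unfolding dfs_finished_closed_def list.set(1) Diff_empty by blast
  fix a b assume "a \<in> set vis" "b \<in> set vis"
  then have "(a, r) \<in> (dfs_orientation EC vis Tr)\<^sup>*" "(r, b) \<in> (dfs_orientation EC vis Tr)\<^sup>*"
    using dfs_orientation_reachD(2,3)[OF reach] by auto
  then show "(a, b) \<in> (dfs_orientation EC vis Tr)\<^sup>*" by (rule rtrancl_trans)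
qed

lemma relpow_greedy_step_between:
  assumes "T0 \<subseteq> Eu" "(T0, T) \<in> (greedy_step Eu) ^^ K"
  shows "T0 \<subseteq> T \<and> T \<subseteq> Eu"
  using assms(2)
proof (induction K arbitrary: T)
  case (Suc K)
  then obtain S where "(T0, S) \<in> (greedy_step Eu) ^^ K" "(S, T) \<in> greedy_step Eu" by auto
  with Suc.IH show ?case unfolding greedy_step_def by blast
qed (use assms(1) in simp)

lemma step3_outputE:
  assumes "step3_output V T H"
  obtains r vis Tr where
    "\<And>C. C \<in> ucomponents V (T - bridges V T) \<Longrightarrow>
       r C \<in> C \<and> dfs_reach (comp_edges T (bridges V T) C) (r C) [] (vis C) (Tr C)"
    "\<And>C. C \<in> ucomponents V (T - bridges V T) \<Longrightarrow>
       dfs_orientation (comp_edges T (bridges V T) C) (vis C) (Tr C) \<subseteq> H"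
    "uedges (bridges V T) \<subseteq> H"
proof -
  from assms obtain r vis Tr where
    dfs: "\<forall>C\<in>ucomponents V (T - bridges V T).
      r C \<in> C \<and> dfs_reach (comp_edges T (bridges V T) C) (r C) [] (vis C) (Tr C)" and
    H: "H = (\<Union>C\<in>ucomponents V (T - bridges V T).
          {(u, v). {u, v} \<in> comp_edges T (bridges V T) C \<and> pre (vis C) u < pre (vis C) v \<and> {u, v} \<in> Tr C}
        \<union> {(v, u). {u, v} \<in> comp_edges T (bridges V T) C \<and> pre (vis C) u < pre (vis C) v \<and> {u, v} \<notin> Tr C})
       \<union> {(u, v). {u, v} \<in> bridges V T}"
    unfolding step3_output_def Let_def by blast
  show thesis
  proof (rule that)
    show "dfs_orientation (comp_edges T (bridges V T) C) (vis C) (Tr C) \<subseteq> H"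
      if "C \<in> ucomponents V (T - bridges V T)" for C
      using that unfolding H dfs_orientation_def by blast
  qed (use dfs H in \<open>auto simp: uedges_def\<close>)
qed

lemma ucomponentsE:
  assumes "C \<in> ucomponents V E"
  obtains c where "c \<in> V" "C = {v \<in> V. (c, v) \<in> (uedges E)\<^sup>*}"
  using assms unfolding ucomponents_def by blast

lemma bridgeless_comp_edges:
  assumes "simple_ugraph V T" "C \<in> ucomponents V (T - bridges V T)"
  shows "bridgeless (comp_edges T (bridges V T) C)"
  unfolding bridgeless_def
proof (intro allI impI)
  let ?F = "T - bridges V T"
  fix x y assume xy: "{x, y} \<in> comp_edges T (bridges V T) C"
  then have "{x, y} \<in> ?F" "x \<in> C" by (auto simp: comp_edges_def)
  from assms(2) obtain c where C: "C = {v \<in> V. (c, v) \<in> (uedges ?F)\<^sup>*}" by (rule ucomponentsE)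
  have "(x, y) \<in> (uedges (?F - {{x, y}}))\<^sup>*"
    using reach_without_bridges[OF assms(1) \<open>{x, y} \<in> ?F\<close>] .
  from rtrancl_uedges_component[OF this _ simple_ugraph_subset[OF assms(1)] C \<open>x \<in> C\<close>]
  have "(x, y) \<in> (uedges {f \<in> ?F - {{x, y}}. f \<subseteq> C})\<^sup>*" by blast
  moreover have "{f \<in> ?F - {{x, y}}. f \<subseteq> C} = comp_edges T (bridges V T) C - {{x, y}}"
    unfolding comp_edges_def by blast
  ultimately show "(x, y) \<in> (uedges (comp_edges T (bridges V T) C - {{x, y}}))\<^sup>*" by simp
qed

lemma component_subset_dfs_visited:
  assumes "simple_ugraph V T" "C \<in> ucomponents V (T - Eb)" "r \<in> C"
    and "dfs_reach (comp_edges T Eb C) r [] vis Tr" "bridgeless (comp_edges T Eb C)"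
  shows "C \<subseteq> set vis"
proof
  let ?F = "T - Eb"
  fix w assume "w \<in> C"
  from assms(2) obtain c where C: "C = {v \<in> V. (c, v) \<in> (uedges ?F)\<^sup>*}" by (rule ucomponentsE)
  have "(c, r) \<in> (uedges ?F)\<^sup>*" using assms(3) C by simp
  then have "(r, c) \<in> (uedges ?F)\<^sup>*" by (rule rtrancl_uedges_sym)
  moreover have "(c, w) \<in> (uedges ?F)\<^sup>*" using \<open>w \<in> C\<close> C by simp
  ultimately have "(r, w) \<in> (uedges ?F)\<^sup>*" by (rule rtrancl_trans)
  from rtrancl_uedges_component[OF this order_refl simple_ugraph_subset[OF assms(1)] C assms(3)]
  have "(r, w) \<in> (uedges (comp_edges T Eb C))\<^sup>*" unfolding comp_edges_def by simp
  then show "w \<in> set vis"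
    using dfs_complete_strongly_connected(1,2)[OF assms(4,5)] by (rule rtrancl_uedges_closed)
qed

lemma step3_output_strongly_connected:
  assumes "simple_ugraph V T" "uconnected V T" "step3_output V T H"
  shows "strongly_connected V H"
proof -
  let ?Eb = "bridges V T"
  obtain r vis Tr where
    dfs: "\<And>C. C \<in> ucomponents V (T - ?Eb) \<Longrightarrow>
       r C \<in> C \<and> dfs_reach (comp_edges T ?Eb C) (r C) [] (vis C) (Tr C)" and
    oriented: "\<And>C. C \<in> ucomponents V (T - ?Eb) \<Longrightarrow>
       dfs_orientation (comp_edges T ?Eb C) (vis C) (Tr C) \<subseteq> H" and
    bridges: "uedges ?Eb \<subseteq> H"
    using assms(3) by (rule step3_outputE) blast
  have "(a, b) \<in> H\<^sup>*" if ab: "{a, b} \<in> T" for a b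
  proof (cases "{a, b} \<in> ?Eb")
    case True
    then show ?thesis using bridges by (auto simp: uedges_def)
  next
    case False
    define C where "C = {v \<in> V. (a, v) \<in> (uedges (T - ?Eb))\<^sup>*}"
    have "a \<in> V" "b \<in> V" using simple_ugraph_edge_vertices[OF assms(1) ab] by simp_all
    then have C: "C \<in> ucomponents V (T - ?Eb)" "a \<in> C" "b \<in> C"
      using ab False unfolding C_def ucomponents_def uedges_def by auto
    note NB = bridgeless_comp_edges[OF assms(1) C(1)]
    have "C \<subseteq> set (vis C)"
      using component_subset_dfs_visited[OF assms(1) C(1) _ _ NB] dfs[OF C(1)] by blast
    with C(2,3) have "(a, b) \<in> (dfs_orientation (comp_edges T ?Eb C) (vis C) (Tr C))\<^sup>*"
      using dfs_complete_strongly_connected(3)[OF conjunct2[OF dfs[OF C(1)]] NB] by blast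
    then show ?thesis using rtrancl_mono[OF oriented[OF C(1)]] by blast
  qed
  then have "(uedges T)\<^sup>* \<subseteq> H\<^sup>*" by (intro rtrancl_subset_rtrancl) (auto simp: uedges_def)
  then show ?thesis using assms(2) unfolding uconnected_def strongly_connected_def by blast
qed

theorem theorem2:
  fixes V :: "'a set" and Eu T0 :: "'a set set" and H :: "nat \<Rightarrow> ('a \<times> 'a) set"
  assumes "simple_ugraph V Eu"
    and "uconnected V Eu"
    and "card V \<ge> 2"
    and "spanning_tree V Eu T0"
    and "\<forall>K \<le> card (Eu - T0). \<exists>T. (T0, T) \<in> (greedy_step Eu) ^^ K \<and> step3_output V T (H K)"
  shows "(\<forall>K \<le> card (Eu - T0). strongly_connected V (H K)) \<and>
         Min ((\<lambda>K. Phi V (H K)) ` {0 .. card (Eu - T0)})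
           \<le> 2 * umaxdeg V T0 * (udiam V T0)^2 * (1 + umaxdeg V T0) ^ (4 * udiam V T0)"
proof -
  have T0: "T0 \<subseteq> Eu" "uconnected V T0" "\<nexists>xs. ucycle T0 xs"
    using assms(4) unfolding spanning_tree_def by blast+
  have "strongly_connected V (H K)" if K: "K \<le> card (Eu - T0)" for K
  proof -
    obtain T where T: "(T0, T) \<in> (greedy_step Eu) ^^ K" "step3_output V T (H K)"
      using assms(5) K by blast
    have "T0 \<subseteq> T" "T \<subseteq> Eu" using relpow_greedy_step_between[OF T0(1) T(1)] by simp_all
    then show ?thesis
      using step3_output_strongly_connected[OF _ _ T(2)] simple_ugraph_subset[OF assms(1)]
        uconnected_mono[OF T0(2)] by blast
  qed
  moreover have "Phi V (H 0) = 2 * umaxdeg V T0 * (udiam V T0)^2 * (1 + umaxdeg V T0) ^ (4 * udiam V T0)"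
  proof -
    have simple: "simple_ugraph V T0" using simple_ugraph_subset[OF assms(1) T0(1)] .
    have "step3_output V T0 (H 0)" using assms(5)[rule_format, of 0] by simp
    then have "H 0 = uedges T0" using step3_output_acyclic bridges_acyclic[OF simple T0(3)] by blast
    then show ?thesis using Phi_uedges[OF simple] by simp
  qed
  moreover have "Min ((\<lambda>K. Phi V (H K)) ` {0 .. card (Eu - T0)}) \<le> Phi V (H 0)"
    by (rule Min_le) auto
  ultimately show ?thesis by simp
qed

end
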